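(* Let $\langle B,\wedge,{}'\rangle$ be an algebra with $\wedge$ binary and ${}'$ unary satisfying $x\wedge(y\wedge z)\approx (y\wedge x)\wedge z$ and $x\approx (x'\wedge y)'\wedge(x'\wedge y')'$. Then $x\wedge(y\wedge u)=x\wedge(u\wedge y)$ for all $x,y,u\in B$. *)

theory Defs
  imports Main
begin

end

theory Submission
  imports Defs
begin

text \<open>Write \<open>\<cdot>\<close> for \<open>\<and>\<close>. The first axiom makes left multiplication an anti-homomorphism, so
  the inner factors of \<open>x \<cdot> (y \<cdot> (z \<cdot> w))\<close> can be exchanged. The second axiom, applied to
  \<open>c x \<cdot> y\<close> (whose complement \<open>c (c x \<cdot> y)\<close> multiplies with \<open>c (c x \<cdot> c y)\<close> to \<open>x\<close>), factors
  \<open>c x \<cdot> y\<close> through \<open>c x\<close> on either side. This makes squares of complements central, and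
  then every \<open>a = c (p \<cdot> (c z \<cdot> r))\<close> satisfies \<open>a \<cdot> (s \<cdot> z) = z \<cdot> (s \<cdot> a)\<close>. The second axiom
  also gives every \<open>x\<close> a right factor of this form, whence \<open>x \<cdot> z = z \<cdot> x\<close>.\<close>

locale huntington_meet_algebra =
  fixes meet :: "'a \<Rightarrow> 'a \<Rightarrow> 'a" (infixl "\<cdot>" 70)
    and c :: "'a \<Rightarrow> 'a"
  assumes meet_left_rotate: "x \<cdot> (y \<cdot> z) = y \<cdot> x \<cdot> z"
    and huntington: "x = c (c x \<cdot> y) \<cdot> c (c x \<cdot> c y)"
begin

lemma meet_exchange: "x \<cdot> (y \<cdot> (z \<cdot> w)) = x \<cdot> (z \<cdot> (y \<cdot> w))"
proof -
  have "x \<cdot> (y \<cdot> (z \<cdot> w)) = z \<cdot> (y \<cdot> x) \<cdot> w"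
    by (simp only: meet_left_rotate [of x y] meet_left_rotate [of "y \<cdot> x"])
  also have "\<dots> = x \<cdot> (z \<cdot> (y \<cdot> w))"
    by (simp only: meet_left_rotate)
  finally show ?thesis .
qed

lemma huntington_meet: "x \<cdot> z = c (c x \<cdot> c y) \<cdot> (c (c x \<cdot> y) \<cdot> z)"
proof -
  have "x \<cdot> z = c (c x \<cdot> y) \<cdot> c (c x \<cdot> c y) \<cdot> z"
    by (simp only: huntington [of x y, symmetric])
  also have "\<dots> = c (c x \<cdot> c y) \<cdot> (c (c x \<cdot> y) \<cdot> z)"
    by (rule meet_left_rotate [symmetric])
  finally show ?thesis .
qed

lemma huntington_right_commute: "c (c x \<cdot> c y) \<cdot> x = x \<cdot> c (c x \<cdot> c y)"
proof -
  have "c (c x \<cdot> c y) \<cdot> x = c (c x \<cdot> c y) \<cdot> (c (c x \<cdot> y) \<cdot> c (c x \<cdot> c y))"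
    by (simp only: huntington [of x y, symmetric])
  also have "\<dots> = x \<cdot> c (c x \<cdot> c y)"
    by (rule huntington_meet [symmetric])
  finally show ?thesis .
qed

lemma compl_meet_commute: "c x \<cdot> (c x \<cdot> y) = c x \<cdot> y \<cdot> c x"
proof -
  have cx: "c (c (c x \<cdot> y) \<cdot> c (c x \<cdot> c y)) = c x"
    by (simp only: huntington [of x y, symmetric])
  show ?thesis
    using huntington_right_commute [of "c x \<cdot> y" "c x \<cdot> c y"] unfolding cx .
qed

lemma compl_square_central: "c x \<cdot> c x \<cdot> y = y \<cdot> (c x \<cdot> c x)"
proof -
  have "c x \<cdot> c x \<cdot> y = c x \<cdot> (c x \<cdot> y)"
    by (rule meet_left_rotate [symmetric])
  also have "\<dots> = c x \<cdot> y \<cdot> c x"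
    by (rule compl_meet_commute)
  also have "\<dots> = y \<cdot> (c x \<cdot> c x)"
    by (rule meet_left_rotate [symmetric])
  finally show ?thesis .
qed

lemma compl_sandwich: "c x \<cdot> (y \<cdot> (c x \<cdot> z)) = z \<cdot> (c x \<cdot> (y \<cdot> c x))"
proof -
  have "c x \<cdot> (y \<cdot> (c x \<cdot> z)) = c x \<cdot> c x \<cdot> (y \<cdot> z)"
    by (simp only: meet_exchange meet_left_rotate)
  also have "\<dots> = y \<cdot> z \<cdot> (c x \<cdot> c x)"
    by (rule compl_square_central)
  also have "\<dots> = z \<cdot> (c x \<cdot> (y \<cdot> c x))"
    by (simp only: meet_exchange meet_left_rotate)
  finally show ?thesis .
qed

lemma huntington_factor_commute: "c (c x \<cdot> y) \<cdot> (z \<cdot> x) = x \<cdot> (z \<cdot> c (c x \<cdot> y))"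
proof -
  let ?a = "c (c x \<cdot> y)" and ?b = "c (c x \<cdot> c y)"
  have "?a \<cdot> (z \<cdot> x) = ?a \<cdot> (z \<cdot> (?a \<cdot> ?b))"
    by (simp only: huntington [of x y, symmetric])
  also have "\<dots> = ?b \<cdot> (?a \<cdot> (z \<cdot> ?a))"
    by (rule compl_sandwich)
  also have "\<dots> = x \<cdot> (z \<cdot> ?a)"
    by (rule huntington_meet [symmetric])
  finally show ?thesis .
qed

lemma compl_meet_eq_right: "c x \<cdot> y = c (c (c x \<cdot> y) \<cdot> (c x \<cdot> c y)) \<cdot> c x"
proof -
  have x: "c (c x \<cdot> y) \<cdot> c (c x \<cdot> c y) = x"
    by (rule huntington [symmetric])
  show ?thesis
    using huntington [of "c x \<cdot> y" "c x \<cdot> c y"] unfolding x .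
qed

lemma compl_meet_eq_left: "c x \<cdot> y = c x \<cdot> c (c (c x \<cdot> y) \<cdot> c (c (c x \<cdot> c y)))"
proof -
  have x: "c (c x \<cdot> y) \<cdot> c (c x \<cdot> c y) = x"
    by (rule huntington [symmetric])
  show ?thesis
    using huntington [of "c x \<cdot> y" "c (c x \<cdot> c y)"] unfolding x .
qed

lemma meet_compl_to_front: "y \<cdot> (c x \<cdot> z) = c x \<cdot> (c (c (c x \<cdot> y) \<cdot> (c x \<cdot> c y)) \<cdot> z)"
proof -
  have "y \<cdot> (c x \<cdot> z) = c x \<cdot> y \<cdot> z"
    by (rule meet_left_rotate)
  also have "\<dots> = c (c (c x \<cdot> y) \<cdot> (c x \<cdot> c y)) \<cdot> c x \<cdot> z"
    by (subst compl_meet_eq_right) (rule refl)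
  also have "\<dots> = c x \<cdot> (c (c (c x \<cdot> y) \<cdot> (c x \<cdot> c y)) \<cdot> z)"
    by (rule meet_left_rotate [symmetric])
  finally show ?thesis .
qed

lemma compl_factor_commute: "c (p \<cdot> (c q \<cdot> r)) \<cdot> (s \<cdot> q) = q \<cdot> (s \<cdot> c (p \<cdot> (c q \<cdot> r)))"
  unfolding meet_compl_to_front [of p q r] by (rule huntington_factor_commute)

lemma huntington_right_factor: "\<exists>e. e \<cdot> c (c x \<cdot> y) = x"
proof -
  let ?q = "c (c x \<cdot> y) \<cdot> c (c (c x \<cdot> c y))"
  have "c (c x \<cdot> ?q) \<cdot> c (c x \<cdot> c ?q) = x"
    by (rule huntington [symmetric])
  then show ?thesis
    unfolding compl_meet_eq_left [symmetric] ..
qed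

lemma meet_commute: "x \<cdot> z = z \<cdot> x"
proof -
  let ?a = "c (c x \<cdot> (c z \<cdot> z))"
  obtain e where x: "e \<cdot> ?a = x"
    using huntington_right_factor by blast
  have "x \<cdot> z = e \<cdot> ?a \<cdot> z"
    by (simp only: x)
  also have "\<dots> = ?a \<cdot> (e \<cdot> z)"
    by (rule meet_left_rotate [symmetric])
  also have "\<dots> = z \<cdot> (e \<cdot> ?a)"
    by (rule compl_factor_commute)
  finally show ?thesis
    by (simp only: x)
qed

end

theorem lemma6p12:
  fixes meet :: "'a \<Rightarrow> 'a \<Rightarrow> 'a" and c :: "'a \<Rightarrow> 'a"
  assumes ax1: "\<And>x y z. meet x (meet y z) = meet (meet y x) z"
    and ax2: "\<And>x y. x = meet (c (meet (c x) y)) (c (meet (c x) (c y)))"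
  shows "\<forall>x y u. meet x (meet y u) = meet x (meet u y)"
proof -
  interpret huntington_meet_algebra meet c
    using ax1 ax2 by unfold_locales
  show ?thesis
    using meet_commute by metis
qed

end
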